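(* Let $n\ge1$. There exist constants $C>0$ and $\delta_0>0$ depending only on $n$ such that for every $0<\delta<\delta_0$, every $B\in M_\delta^+$ and every eigenvalue $\lambda$ of $B$, we have $\lambda\in N^+_{C\delta}$. In particular ${\rm Re}\,\lambda>0$.
   Context: Writing $z=x+iy$ with $x,y$ real: $N_\epsilon^+=\{z\in\mathbb C:|y|<\epsilon x\}$ and $M_\delta^+=\{z\in{\rm Mat}(n,\mathbb C): z^T=z,\ \delta x+y\text{ and }\delta x-y\text{ positive definite}\}$. *)

theory Defs
  imports "HOL-Analysis.Analysis"
begin

definition pos_def_mat :: "real^'n^'n \<Rightarrow> bool" where
  "pos_def_mat M \<longleftrightarrow> transpose M = M \<and> (\<forall>x::real^'n. x \<noteq> 0 \<longrightarrow> x \<bullet> (M *v x) > 0)"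

definition re_mat :: "complex^'n^'m \<Rightarrow> real^'n^'m" where
  "re_mat B = (\<chi> i j. Re (B $ i $ j))"

definition im_mat :: "complex^'n^'m \<Rightarrow> real^'n^'m" where
  "im_mat B = (\<chi> i j. Im (B $ i $ j))"

definition N_plus :: "real \<Rightarrow> complex set" where
  "N_plus \<epsilon> = {z. \<bar>Im z\<bar> < \<epsilon> * Re z}"

definition M_plus :: "real \<Rightarrow> (complex^'n^'n) set" where
  "M_plus \<delta> = {B. transpose B = B \<and>
      pos_def_mat (\<delta> *\<^sub>R re_mat B + im_mat B) \<and>
      pos_def_mat (\<delta> *\<^sub>R re_mat B - im_mat B)}"

definition mat_eigenvalue :: "complex^'n^'n \<Rightarrow> complex \<Rightarrow> bool" where
  "mat_eigenvalue B lam \<longleftrightarrow> (\<exists>v::complex^'n. v \<noteq> 0 \<and> B *v v = lam *s v)"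

end

theory Submission
  imports Defs
begin

text \<open>Let \<open>v = a + i b\<close> be an eigenvector of \<open>B = X + i Y\<close> for \<open>\<lambda>\<close>, so that
  \<open>v\<^sup>* B v = \<lambda> |v|\<^sup>2\<close>. Because \<open>X\<close> and \<open>Y\<close> are symmetric, the cross terms cancel and
  \<open>Re (v\<^sup>* B v) = a\<^sup>T X a + b\<^sup>T X b\<close>, \<open>Im (v\<^sup>* B v) = a\<^sup>T Y a + b\<^sup>T Y b\<close>. Positive
  definiteness of \<open>\<delta> X \<plusminus> Y\<close> then gives \<open>|Im \<lambda>| < \<delta> Re \<lambda>\<close>, so in fact \<open>C = 1\<close> works
  for every \<open>\<delta> > 0\<close>.\<close>

definition re_vec :: "complex^'n \<Rightarrow> real^'n" where
  "re_vec v = (\<chi> i. Re (v $ i))"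

definition im_vec :: "complex^'n \<Rightarrow> real^'n" where
  "im_vec v = (\<chi> i. Im (v $ i))"

definition sesq_form :: "complex^'n^'n \<Rightarrow> complex^'n \<Rightarrow> complex" where
  "sesq_form B v = (\<Sum>i\<in>UNIV. cnj (v $ i) * (B *v v) $ i)"

lemma sum_symmetric_mult_commutator_eq_0:
  fixes Y :: "'i \<Rightarrow> 'i \<Rightarrow> 'a::comm_ring"
  assumes "\<And>i j. Y i j = Y j i"
  shows "(\<Sum>i\<in>I. \<Sum>j\<in>I. Y i j * (a i * b j - b i * a j)) = 0"
proof -
  have "(\<Sum>i\<in>I. \<Sum>j\<in>I. Y i j * (b i * a j)) = (\<Sum>j\<in>I. \<Sum>i\<in>I. Y i j * (b i * a j))"
    by (rule sum.swap)
  also have "\<dots> = (\<Sum>i\<in>I. \<Sum>j\<in>I. Y i j * (a i * b j))"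
    using assms by (simp add: mult.commute mult.left_commute)
  finally show ?thesis
    by (simp add: right_diff_distrib sum_subtractf)
qed

lemma re_vec_im_vec_eq_0_iff: "re_vec v = 0 \<and> im_vec v = 0 \<longleftrightarrow> v = 0"
  by (auto simp: re_vec_def im_vec_def vec_eq_iff complex_eq_iff)

lemma transpose_eq_self_iff: "transpose A = A \<longleftrightarrow> (\<forall>i j. A $ i $ j = A $ j $ i)"
  by (auto simp: transpose_def vec_eq_iff)

lemma Re_sesq_form_symmetric:
  assumes "transpose B = B"
  shows "Re (sesq_form B v) =
    re_vec v \<bullet> (re_mat B *v re_vec v) + im_vec v \<bullet> (re_mat B *v im_vec v)"
proof -
  let ?a = "\<lambda>i. Re (v $ i)" and ?b = "\<lambda>i. Im (v $ i)"
  have "Re (sesq_form B v) =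
     (\<Sum>i\<in>UNIV. \<Sum>j\<in>UNIV. Re (B$i$j) * (?a i * ?a j + ?b i * ?b j)) -
     (\<Sum>i\<in>UNIV. \<Sum>j\<in>UNIV. Im (B$i$j) * (?a i * ?b j - ?b i * ?a j))"
    unfolding sesq_form_def matrix_vector_mult_def
    by (simp add: Re_sum sum_distrib_left sum_subtractf[symmetric] algebra_simps)
  also have "\<dots> = re_vec v \<bullet> (re_mat B *v re_vec v) + im_vec v \<bullet> (re_mat B *v im_vec v)"
    using sum_symmetric_mult_commutator_eq_0[of "\<lambda>i j. Im (B$i$j)" ?a ?b UNIV] assms
    by (simp add: transpose_eq_self_iff re_mat_def re_vec_def im_vec_def inner_vec_def
        matrix_vector_mult_def sum_distrib_left sum.distrib[symmetric] algebra_simps)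
  finally show ?thesis .
qed

lemma Im_sesq_form_symmetric:
  assumes "transpose B = B"
  shows "Im (sesq_form B v) =
    re_vec v \<bullet> (im_mat B *v re_vec v) + im_vec v \<bullet> (im_mat B *v im_vec v)"
proof -
  let ?a = "\<lambda>i. Re (v $ i)" and ?b = "\<lambda>i. Im (v $ i)"
  have "Im (sesq_form B v) =
     (\<Sum>i\<in>UNIV. \<Sum>j\<in>UNIV. Im (B$i$j) * (?a i * ?a j + ?b i * ?b j)) +
     (\<Sum>i\<in>UNIV. \<Sum>j\<in>UNIV. Re (B$i$j) * (?a i * ?b j - ?b i * ?a j))"
    unfolding sesq_form_def matrix_vector_mult_def
    by (simp add: Im_sum sum_distrib_left sum.distrib[symmetric] algebra_simps)
  also have "\<dots> = re_vec v \<bullet> (im_mat B *v re_vec v) + im_vec v \<bullet> (im_mat B *v im_vec v)"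
    using sum_symmetric_mult_commutator_eq_0[of "\<lambda>i j. Re (B$i$j)" ?a ?b UNIV] assms
    by (simp add: transpose_eq_self_iff im_mat_def re_vec_def im_vec_def inner_vec_def
        matrix_vector_mult_def sum_distrib_left sum.distrib[symmetric] algebra_simps)
  finally show ?thesis .
qed

lemma sesq_form_eigenvector:
  assumes "B *v v = lam *s v"
  shows "sesq_form B v = lam * of_real ((norm v)\<^sup>2)"
proof -
  have "(norm v)\<^sup>2 = (\<Sum>i\<in>UNIV. (norm (v $ i))\<^sup>2)"
    by (simp add: norm_vec_def L2_set_def sum_nonneg)
  then have "of_real ((norm v)\<^sup>2) = (\<Sum>i\<in>UNIV. complex_of_real ((norm (v $ i))\<^sup>2))"
    by (simp only: of_real_sum)
  also have "\<dots> = (\<Sum>i\<in>UNIV. cnj (v $ i) * v $ i)"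
    by (intro sum.cong refl) (metis complex_norm_square mult.commute)
  finally have "of_real ((norm v)\<^sup>2) = (\<Sum>i\<in>UNIV. cnj (v $ i) * v $ i)" .
  then show ?thesis
    by (simp add: sesq_form_def assms sum_distrib_left algebra_simps)
qed

lemma pos_def_mat_quadratic_form_add_pos:
  assumes "pos_def_mat M" and "a \<noteq> 0 \<or> b \<noteq> 0"
  shows "a \<bullet> (M *v a) + b \<bullet> (M *v b) > 0"
proof -
  have "x \<bullet> (M *v x) \<ge> 0" for x
    using assms(1) unfolding pos_def_mat_def by (cases "x = 0") (auto intro: less_imp_le)
  with assms show ?thesis
    unfolding pos_def_mat_def by (metis add_pos_nonneg add_nonneg_pos)
qed

lemma quadratic_form_scaleR_add:
  fixes X Y :: "real^'n^'n"
  shows "x \<bullet> ((c *\<^sub>R X + Y) *v x) = c * (x \<bullet> (X *v x)) + x \<bullet> (Y *v x)"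
  by (simp add: matrix_vector_mult_add_rdistrib scaleR_matrix_vector_assoc[symmetric] inner_add_right)

lemma quadratic_form_scaleR_diff:
  fixes X Y :: "real^'n^'n"
  shows "x \<bullet> ((c *\<^sub>R X - Y) *v x) = c * (x \<bullet> (X *v x)) - x \<bullet> (Y *v x)"
  by (simp add: matrix_vector_mult_diff_rdistrib scaleR_matrix_vector_assoc[symmetric] inner_diff_right)

lemma sesq_form_M_plus_sector:
  assumes "B \<in> M_plus \<delta>" and "v \<noteq> 0"
  shows "\<bar>Im (sesq_form B v)\<bar> < \<delta> * Re (sesq_form B v)"
proof -
  let ?a = "re_vec v" and ?b = "im_vec v"
  from assms(1) have sym: "transpose B = B"
    and pos_add: "pos_def_mat (\<delta> *\<^sub>R re_mat B + im_mat B)"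
    and pos_diff: "pos_def_mat (\<delta> *\<^sub>R re_mat B - im_mat B)"
    by (auto simp: M_plus_def)
  have ab: "?a \<noteq> 0 \<or> ?b \<noteq> 0"
    using assms(2) re_vec_im_vec_eq_0_iff by blast
  have "0 < \<delta> * Re (sesq_form B v) + Im (sesq_form B v)"
    using pos_def_mat_quadratic_form_add_pos[OF pos_add ab]
    unfolding quadratic_form_scaleR_add
    by (simp add: Re_sesq_form_symmetric[OF sym] Im_sesq_form_symmetric[OF sym] algebra_simps)
  moreover have "0 < \<delta> * Re (sesq_form B v) - Im (sesq_form B v)"
    using pos_def_mat_quadratic_form_add_pos[OF pos_diff ab]
    unfolding quadratic_form_scaleR_diff
    by (simp add: Re_sesq_form_symmetric[OF sym] Im_sesq_form_symmetric[OF sym] algebra_simps)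
  ultimately show ?thesis by linarith
qed

lemma eigenvalue_M_plus_sector:
  assumes "B \<in> M_plus \<delta>" and "mat_eigenvalue B lam"
  shows "\<bar>Im lam\<bar> < \<delta> * Re lam"
proof -
  obtain v where "v \<noteq> 0" and eigen: "B *v v = lam *s v"
    using assms(2) by (auto simp: mat_eigenvalue_def)
  have "\<bar>Im (sesq_form B v)\<bar> < \<delta> * Re (sesq_form B v)"
    using sesq_form_M_plus_sector[OF assms(1) \<open>v \<noteq> 0\<close>] .
  then have "\<bar>Im lam * (norm v)\<^sup>2\<bar> < \<delta> * (Re lam * (norm v)\<^sup>2)"
    unfolding sesq_form_eigenvector[OF eigen] by simp
  moreover have "(norm v)\<^sup>2 > 0"
    using \<open>v \<noteq> 0\<close> by simp
  ultimately show ?thesis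
    by (simp add: abs_mult)
qed

theorem proposition6p2:
  "\<exists>C \<delta>\<^sub>0. C > 0 \<and> \<delta>\<^sub>0 > 0 \<and>
     (\<forall>\<delta> B lam. 0 < \<delta> \<and> \<delta> < \<delta>\<^sub>0 \<and> B \<in> (M_plus \<delta> :: (complex^'n^'n) set) \<and> mat_eigenvalue B lam
        \<longrightarrow> lam \<in> N_plus (C * \<delta>) \<and> Re lam > 0)"
proof (intro exI[of _ 1] conjI allI impI)
  fix \<delta> :: real and B :: "complex^'n^'n" and lam
  assume "0 < \<delta> \<and> \<delta> < 1 \<and> B \<in> M_plus \<delta> \<and> mat_eigenvalue B lam"
  then have "0 < \<delta>" and sector: "\<bar>Im lam\<bar> < \<delta> * Re lam"
    using eigenvalue_M_plus_sector by blast+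
  then show "lam \<in> N_plus (1 * \<delta>)"
    by (simp add: N_plus_def)
  from sector \<open>0 < \<delta>\<close> show "Re lam > 0"
    by (metis abs_ge_zero le_less_trans zero_less_mult_pos)
qed auto

end
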